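(* Let $n\ge1$, $\lambda>0$, and let $\{e_m\}_{1\le m\le n}\cup\{f_{m,k}\}_{1\le m,k\le n}$ be $n^2+n$ independent exponential random variables with parameter $\lambda$. For $k=1,\ldots,n$ let $\mathcal{T}^k=\max_{1\le m\le n}\,(e_m+f_{m,k})$. Then $$\mathbb{E}\left[\max_{1\le k\le n}\max\{e_k,\mathcal{T}^k\}\right]\le\frac{2H_{n^2+n}}{\lambda},$$ where $H_N=\sum_{j=1}^N\frac1j$ is the $N$-th harmonic number.
   Context: In the paper, $e_k$ is the delay of the supervisor's trigger message to worker $k$ and $\mathcal{T}^k$ is the time at which worker $k$ has received all its "redirect" messages, each being a two-message chain (trigger to worker $m$, then redirect from $m$ to $k$); the abstract formulation above records this structure. *)

theory Defs
  imports "HOL-Probability.Probability"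
begin

definition redirect_time :: "nat \<Rightarrow> (nat \<Rightarrow> real) \<Rightarrow> (nat \<Rightarrow> nat \<Rightarrow> real) \<Rightarrow> nat \<Rightarrow> real" where
  "redirect_time n e f k = Max ((\<lambda>m. e m + f m k) ` {1..n})"

end

theory Submission
  imports Defs
begin

text \<open>
  Put all \<open>N = n\<^sup>2 + n\<close> delays over a common threshold \<open>t\<close>. Every quantity
  inside the maximum is a single delay or the sum of two distinct delays, hence at most
  \<open>2 t\<close> plus the total excess of all delays over \<open>t\<close>. An exponential delay exceeds \<open>t\<close>
  by \<open>exp (- l t) / l\<close> on average, so for \<open>t = ln N / l\<close> the expectation is at most
  \<open>(2 ln N + 1) / l\<close>. Finally \<open>H\<^sub>N - ln N\<close> decreases to the
  Euler--Mascheroni constant, which exceeds \<open>1/2\<close>.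
\<close>

lemma euler_mascheroni_le_harm_minus_ln:
  assumes "0 < n"
  shows "euler_mascheroni \<le> harm n - ln (real n)"
proof -
  have "(\<lambda>m. harm (Suc m) - ln (real (Suc m))) \<longlonglongrightarrow> (euler_mascheroni :: real)"
    using euler_mascheroni_LIMSEQ by (rule LIMSEQ_Suc)
  then have "euler_mascheroni \<le> harm (Suc (n - 1)) - ln (real (Suc (n - 1)))"
    by (rule decseq_ge[OF decseq_harm_diff_ln])
  with assms show ?thesis by simp
qed

lemma ln_plus_half_le_harm:
  assumes "0 < n"
  shows "ln (real n) + 1 / 2 \<le> harm n"
  using euler_mascheroni_le_harm_minus_ln[OF assms] euler_mascheroni_gt_19_over_33 by simp

lemma le_threshold_plus_sum_excess:
  fixes x :: "'i \<Rightarrow> real"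
  assumes "finite A" "i \<in> A"
  shows "x i \<le> t + (\<Sum>a\<in>A. max 0 (x a - t))"
proof -
  have "max 0 (x i - t) \<le> (\<Sum>a\<in>A. max 0 (x a - t))"
    using assms by (intro member_le_sum) auto
  then show ?thesis by linarith
qed

lemma add_le_thresholds_plus_sum_excess:
  fixes x :: "'i \<Rightarrow> real"
  assumes "finite A" "i \<in> A" "j \<in> A" "i \<noteq> j"
  shows "x i + x j \<le> 2 * t + (\<Sum>a\<in>A. max 0 (x a - t))"
proof -
  have "max 0 (x i - t) + max 0 (x j - t) = (\<Sum>a\<in>{i, j}. max 0 (x a - t))"
    using assms(4) by simp
  also have "\<dots> \<le> (\<Sum>a\<in>A. max 0 (x a - t))"
    using assms by (intro sum_mono2) auto
  finally show ?thesis by linarith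
qed

lemma Max_completion_le_sum_excess:
  fixes e :: "nat \<Rightarrow> real" and f :: "nat \<Rightarrow> nat \<Rightarrow> real"
  assumes "1 \<le> n" "0 \<le> t"
  shows "Max ((\<lambda>k. max (e k) (redirect_time n e f k)) ` {1..n})
    \<le> 2 * t + (\<Sum>i\<in>{1..n} <+> {1..n} \<times> {1..n}. max 0 (case_sum e (case_prod f) i - t))"
proof -
  let ?x = "case_sum e (case_prod f)" and ?I = "{1..n} <+> {1..n} \<times> {1..n}"
  let ?S = "\<Sum>i\<in>?I. max 0 (?x i - t)"
  have "e k \<le> t + ?S" if "k \<in> {1..n}" for k
    using le_threshold_plus_sum_excess[of ?I "Inl k" ?x t] that by (simp add: InlI)
  moreover have "e m + f m k \<le> 2 * t + ?S" if "m \<in> {1..n}" "k \<in> {1..n}" for m k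
    using add_le_thresholds_plus_sum_excess[of ?I "Inl m" "Inr (m, k)" ?x t] that
    by (simp add: InlI InrI)
  ultimately show ?thesis
    using \<open>1 \<le> n\<close> \<open>0 \<le> t\<close> by (fastforce simp: redirect_time_def)
qed

lemma has_bochner_integral_exponential_excess:
  fixes X :: "'a \<Rightarrow> real"
  assumes "0 < l" "0 \<le> t" and X: "distributed M lborel X (exponential_density l)"
  shows "has_bochner_integral M (\<lambda>\<omega>. max 0 (X \<omega> - t)) (exp (- t * l) / l)"
proof (rule has_bochner_integral_nn_integral)
  have [measurable]: "X \<in> borel_measurable M"
    using distributed_measurable[OF X] by simp
  show "(\<lambda>\<omega>. max 0 (X \<omega> - t)) \<in> borel_measurable M" by measurable
  have "(\<integral>\<^sup>+\<omega>. ennreal (max 0 (X \<omega> - t)) \<partial>M)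
      = (\<integral>\<^sup>+x. ennreal (exponential_density l x) * ennreal (max 0 (x - t)) \<partial>lborel)"
    by (subst distributed_nn_integral[OF X, symmetric]) auto
  also have "\<dots> = (\<integral>\<^sup>+x. ennreal (exponential_density l (t + x)) * ennreal (max 0 x) \<partial>lborel)"
    using nn_integral_real_affine[where c=1 and t=t
        and f="\<lambda>x. ennreal (exponential_density l x) * ennreal (max 0 (x - t))"]
    by simp
  also have "\<dots> = (\<integral>\<^sup>+x. ennreal (exp (- t * l)) * ennreal (exponential_density l x * x ^ 1) \<partial>lborel)"
    using assms by (intro nn_integral_cong)
      (auto simp: exponential_density_def ennreal_mult'[symmetric] exp_add[symmetric]
        algebra_simps ennreal_neg)
  also have "\<dots> = ennreal (exp (- t * l)) * ennreal (1 / l)"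
    using nn_integral_erlang_ith_moment[OF \<open>0 < l\<close>, of 0 1] by (simp add: nn_integral_cmult)
  also have "\<dots> = ennreal (exp (- t * l) / l)"
    using \<open>0 < l\<close> by (simp add: ennreal_mult'[symmetric])
  finally show "(\<integral>\<^sup>+\<omega>. ennreal (max 0 (X \<omega> - t)) \<partial>M) = ennreal (exp (- t * l) / l)" .
qed (use assms in auto)

text \<open>If \<open>G\<close> is not integrable, its integral is the junk value \<open>0 \<le> r\<close>.\<close>

lemma integral_le_if_dominated:
  fixes G R :: "'a \<Rightarrow> real"
  assumes "has_bochner_integral M R r" "0 \<le> r" "\<And>\<omega>. G \<omega> \<le> R \<omega>"
  shows "integral\<^sup>L M G \<le> r"
proof (cases "integrable M G")
  case True
  with assms have "integral\<^sup>L M G \<le> integral\<^sup>L M R"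
    by (intro integral_mono) (auto simp: has_bochner_integral_iff)
  with assms(1) show ?thesis by (simp add: has_bochner_integral_iff)
qed (simp add: not_integrable_integral_eq assms(2))

theorem lemma3:
  fixes M :: "'a measure" and n :: nat and l :: real
    and e :: "nat \<Rightarrow> 'a \<Rightarrow> real" and f :: "nat \<Rightarrow> nat \<Rightarrow> 'a \<Rightarrow> real"
  assumes "prob_space M"
    and "n \<ge> 1" and "l > 0"
    and "\<And>m. m \<in> {1..n} \<Longrightarrow> distributed M lborel (e m) (exponential_density l)"
    and "\<And>m k. m \<in> {1..n} \<Longrightarrow> k \<in> {1..n} \<Longrightarrow>
           distributed M lborel (f m k) (exponential_density l)"
    and "prob_space.indep_vars M (\<lambda>_. borel)
           (\<lambda>i. case i of Inl m \<Rightarrow> e m | Inr (m, k) \<Rightarrow> f m k)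
           ({1..n} <+> ({1..n} \<times> {1..n}))"
  shows "prob_space.expectation M
           (\<lambda>\<omega>. Max ((\<lambda>k. max (e k \<omega>) (redirect_time n (\<lambda>m. e m \<omega>) (\<lambda>m k. f m k \<omega>) k)) ` {1..n}))
         \<le> 2 * harm (n^2 + n) / l"
proof -
  interpret prob_space M by fact
  define I where "I = {1..n} <+> {1..n} \<times> {1..n}"
  define X where "X = (\<lambda>i \<omega>. case_sum (\<lambda>m. e m \<omega>) (\<lambda>(m, k). f m k \<omega>) i)"
  define N where "N = n^2 + n"
  define t where "t = ln (real N) / l"
  have "card I = N" "1 \<le> N"
    using \<open>n \<ge> 1\<close> by (simp_all add: I_def N_def card_Plus power2_eq_square)
  then have "0 \<le> t" "exp (- t * l) = 1 / N"
    using \<open>l > 0\<close> by (simp_all add: t_def exp_minus inverse_eq_divide)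
  have "distributed M lborel (X i) (exponential_density l)" if "i \<in> I" for i
    using that assms(4,5) by (auto simp: I_def X_def)
  then have "has_bochner_integral M (\<lambda>\<omega>. 2 * t + (\<Sum>i\<in>I. max 0 (X i \<omega> - t)))
      (2 * t + (\<Sum>i\<in>I. exp (- t * l) / l))"
    by (intro has_bochner_integral_add has_bochner_integral_sum
        has_bochner_integral_exponential_excess[OF \<open>l > 0\<close> \<open>0 \<le> t\<close>])
      (auto simp: has_bochner_integral_iff prob_space)
  also have "2 * t + (\<Sum>i\<in>I. exp (- t * l) / l) = (2 * ln N + 1) / l"
    using \<open>card I = N\<close> \<open>exp (- t * l) = 1 / N\<close> \<open>1 \<le> N\<close> \<open>l > 0\<close>
    by (simp add: t_def field_simps)
  finally have "expectation (\<lambda>\<omega>. Max ((\<lambda>k. max (e k \<omega>)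
      (redirect_time n (\<lambda>m. e m \<omega>) (\<lambda>m k. f m k \<omega>) k)) ` {1..n})) \<le> (2 * ln N + 1) / l"
    using \<open>1 \<le> N\<close> \<open>l > 0\<close> Max_completion_le_sum_excess[OF \<open>n \<ge> 1\<close> \<open>0 \<le> t\<close>]
    by (intro integral_le_if_dominated) (auto simp: I_def X_def)
  also have "\<dots> \<le> 2 * harm N / l"
    using ln_plus_half_le_harm[of N] \<open>1 \<le> N\<close> \<open>l > 0\<close> by (simp add: divide_right_mono)
  finally show ?thesis by (simp add: N_def)
qed

end
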